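(* Let $A$ and $N$ be real $m\times n$ matrices, let $\tilde A=A+N$, and assume $\|N\|_2\le\eta$ for some $\eta\ge0$. Let $\tilde A_1,\ldots,\tilde A_n$ be the columns of $\tilde A$, let $\tilde\rho=\mathrm{rank}(\tilde A)\ge 1$, let $\mu\ge 0$, and let $\pi:[n]\to[n]$ be a permutation such that $\tilde A_{\pi(1)},\ldots,\tilde A_{\pi(\tilde\rho)}$ are linearly independent. For $k\in\{0,\ldots,\tilde\rho\}$ let $W_k$ be the orthogonal projection onto $\mathrm{span}\{\tilde A_{\pi(1)},\ldots,\tilde A_{\pi(k)}\}$ ($W_0=0$), $W_k^\perp=I-W_k$, and $\tilde Q_k=W_{k-1}^\perp(\tilde A_{\pi(k)})/\|W_{k-1}^\perp(\tilde A_{\pi(k)})\|$ for $k\in[\tilde\rho]$. Let $s\in[\tilde\rho]$ be such that $\|W_s^\perp(\tilde A_i)\|\le\mu$ for all $i\in[n]$, and define $\tilde F_s:\mathbb R^m\to\mathbb R^s$ by $\tilde F_s(v)=(\tilde Q_{[s]})^*v$, where $\tilde Q_{[s]}$ has columns $\tilde Q_1,\ldots,\tilde Q_s$ (so $\tilde F_s$ is a $2\mu$-distortion of the columns of $\tilde A$). Then $\tilde F_s$ is a $2(\mu+\eta)$-distortion of the columns $A_1,\ldots,A_n$ of $A$, i.e. $$\sup_{i,j\in[n]}\Big|\,\|A_i-A_j\|-\|\tilde F_s(A_i)-\tilde F_s(A_j)\|\,\Big|\le 2(\mu+\eta).$$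
   Context: Vector norms are Euclidean; $\|N\|_2$ is the operator norm of $N$ induced by the Euclidean norm; $[k]=\{1,\ldots,k\}$; $^*$ denotes transpose. A map $F$ on a set $\mathcal A$ is a $\mu$-distortion of $\mathcal A$ if $\sup_{x,y\in\mathcal A}|\,\|x-y\|-\|F(x)-F(y)\|\,|\le\mu$. *)

theory Defs
  imports "HOL-Analysis.Analysis"
begin

definition orth_proj :: "'a::euclidean_space set \<Rightarrow> 'a \<Rightarrow> 'a" where
  "orth_proj S v = (THE w. w \<in> span S \<and> (\<forall>u\<in>S. (v - w) \<bullet> u = 0))"

definition Wproj :: "real^'n^'m \<Rightarrow> (nat \<Rightarrow> 'n) \<Rightarrow> nat \<Rightarrow> real^'m \<Rightarrow> real^'m" where
  "Wproj At p k = orth_proj ((\<lambda>j. column (p j) At) ` {1..k})"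

definition Wperp :: "real^'n^'m \<Rightarrow> (nat \<Rightarrow> 'n) \<Rightarrow> nat \<Rightarrow> real^'m \<Rightarrow> real^'m" where
  "Wperp At p k v = v - Wproj At p k v"

definition Qvec :: "real^'n^'m \<Rightarrow> (nat \<Rightarrow> 'n) \<Rightarrow> nat \<Rightarrow> real^'m" where
  "Qvec At p k = (let w = Wperp At p (k - 1) (column (p k) At) in w /\<^sub>R norm w)"

text \<open>F_s(v) = Q_[s]^* v, a vector in R^s represented by its coordinates k = 1..s.\<close>
definition Fs :: "real^'n^'m \<Rightarrow> (nat \<Rightarrow> 'n) \<Rightarrow> nat \<Rightarrow> real^'m \<Rightarrow> nat \<Rightarrow> real" where
  "Fs At p s v = (\<lambda>k. Qvec At p k \<bullet> v)"

definition dist_s :: "nat \<Rightarrow> (nat \<Rightarrow> real) \<Rightarrow> (nat \<Rightarrow> real) \<Rightarrow> real" where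
  "dist_s s x y = L2_set (\<lambda>k. x k - y k) {1..s}"

end

theory Submission
  imports Defs
begin

text \<open>
  Let \<open>P\<close> be the orthogonal projection onto the span of the first \<open>s\<close> pivot columns
  of \<open>A + N\<close>. The vectors \<open>Q\<^sub>1, \<dots>, Q\<^sub>s\<close> are the Gram--Schmidt vectors of these columns,
  hence an orthonormal basis of that span, so \<open>\<parallel>F\<^sub>s(x) - F\<^sub>s(y)\<parallel> = \<parallel>P(x - y)\<parallel>\<close> and the
  distortion of a difference \<open>x\<close> of columns of \<open>A\<close> is at most \<open>\<parallel>x - P x\<parallel>\<close>. Writing
  \<open>A\<^sub>i - A\<^sub>j = ((A + N)\<^sub>i - (A + N)\<^sub>j) - (N\<^sub>i - N\<^sub>j)\<close>, the residual \<open>I - P\<close> is at most \<open>\<mu>\<close> on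
  each column of \<open>A + N\<close> by hypothesis and is a contraction, while every column of
  \<open>N\<close> has norm at most \<open>\<parallel>N\<parallel>\<^sub>2 \<le> \<eta>\<close>; this gives the bound \<open>2\<mu> + 2\<eta>\<close>.
\<close>

lemma orth_proj_unique:
  fixes S :: "'a::euclidean_space set"
  assumes "w \<in> span S" "\<forall>u\<in>S. (v - w) \<bullet> u = 0"
  shows "orth_proj S v = w"
  unfolding orth_proj_def
proof (rule the_equality)
  show "w \<in> span S \<and> (\<forall>u\<in>S. (v - w) \<bullet> u = 0)" using assms by blast
next
  fix w' assume w': "w' \<in> span S \<and> (\<forall>u\<in>S. (v - w') \<bullet> u = 0)"
  have "orthogonal (w' - w) d" if "d \<in> span S" for d
  proof (rule orthogonal_to_span[OF that])
    fix y assume "y \<in> S"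
    have "(w' - w) \<bullet> y = (v - w) \<bullet> y - (v - w') \<bullet> y" by (simp add: inner_diff_left)
    then show "orthogonal (w' - w) y" using assms(2) w' \<open>y \<in> S\<close> by (simp add: orthogonal_def)
  qed
  moreover have "w' - w \<in> span S" using w' assms(1) by (simp add: span_diff)
  ultimately have "(w' - w) \<bullet> (w' - w) = 0" by (simp add: orthogonal_def)
  then show "w' = w" by simp
qed

lemma orth_proj_in_span_orthogonal:
  fixes S :: "'a::euclidean_space set"
  shows "orth_proj S v \<in> span S" and "\<And>u. u \<in> span S \<Longrightarrow> orthogonal (v - orth_proj S v) u"
proof -
  obtain y z where y: "y \<in> span S" and z: "\<And>w. w \<in> span S \<Longrightarrow> orthogonal z w"
    and v: "v = y + z"
    using orthogonal_subspace_decomp_exists by blast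
  have proj: "orth_proj S v = y"
    using y z span_base v by (intro orth_proj_unique) (auto simp: orthogonal_def)
  then show "orth_proj S v \<in> span S" using y by simp
  have "v - orth_proj S v = z" using proj v by simp
  then show "orthogonal (v - orth_proj S v) u" if "u \<in> span S" for u
    using z[OF that] by simp
qed

lemma orth_proj_diff:
  fixes S :: "'a::euclidean_space set"
  shows "orth_proj S (x - y) = orth_proj S x - orth_proj S y"
proof (rule orth_proj_unique)
  show "orth_proj S x - orth_proj S y \<in> span S"
    by (simp add: orth_proj_in_span_orthogonal(1) span_diff)
  show "\<forall>u\<in>S. (x - y - (orth_proj S x - orth_proj S y)) \<bullet> u = 0"
  proof
    fix u assume "u \<in> S"
    then have "(x - orth_proj S x) \<bullet> u = 0" "(y - orth_proj S y) \<bullet> u = 0"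
      using orth_proj_in_span_orthogonal(2)[OF span_base] unfolding orthogonal_def by blast+
    then show "(x - y - (orth_proj S x - orth_proj S y)) \<bullet> u = 0"
      by (simp add: algebra_simps)
  qed
qed

lemma norm_orth_proj_residual_le:
  fixes S :: "'a::euclidean_space set"
  shows "norm (v - orth_proj S v) \<le> norm v"
proof -
  have "orthogonal (v - orth_proj S v) (orth_proj S v)"
    by (rule orth_proj_in_span_orthogonal(2)[OF orth_proj_in_span_orthogonal(1)])
  then have "(norm v)\<^sup>2 = (norm (v - orth_proj S v))\<^sup>2 + (norm (orth_proj S v))\<^sup>2"
    using norm_add_Pythagorean by force
  then have "(norm (v - orth_proj S v))\<^sup>2 \<le> (norm v)\<^sup>2" by simp
  then show ?thesis by (rule power2_le_imp_le) simp
qed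

lemma orth_proj_distortion_bound:
  fixes S :: "'a::euclidean_space set"
  assumes "norm (b - orth_proj S b) \<le> \<mu>" "norm (b' - orth_proj S b') \<le> \<mu>"
    and "norm e \<le> \<eta>" "norm e' \<le> \<eta>"
  defines "x \<equiv> (b - e) - (b' - e')"
  shows "\<bar>norm x - norm (orth_proj S x)\<bar> \<le> 2 * (\<mu> + \<eta>)"
proof -
  define res where "res = (\<lambda>v. v - orth_proj S v)"
  have "x = (b - b') - (e - e')" by (simp add: x_def algebra_simps)
  then have res_x: "res x = res b - res b' - res (e - e')"
    by (simp only: res_def orth_proj_diff) (simp add: algebra_simps)
  have "norm (res x) \<le> norm (res b) + norm (res b') + norm (res (e - e'))"
    unfolding res_x using norm_triangle_ineq4[of "res b - res b'" "res (e - e')"]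
      norm_triangle_ineq4[of "res b" "res b'"] by linarith
  also have "\<dots> \<le> \<mu> + \<mu> + (\<eta> + \<eta>)"
    using assms(1-4) norm_orth_proj_residual_le[where S = S and v = "e - e'"] norm_triangle_ineq4[of e e']
    unfolding res_def by linarith
  finally show ?thesis
    using norm_triangle_ineq3[of x "orth_proj S x"] by (simp add: res_def)
qed

lemma orth_proj_orthonormal_basis:
  fixes S :: "'a::euclidean_space set" and q :: "'i \<Rightarrow> 'a"
  assumes "finite K" and "\<And>j k. j \<in> K \<Longrightarrow> k \<in> K \<Longrightarrow> q j \<bullet> q k = (if j = k then 1 else 0)"
    and "span (q ` K) = span S"
  shows "orth_proj S z = (\<Sum>k\<in>K. (q k \<bullet> z) *\<^sub>R q k)"
proof (rule orth_proj_unique)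
  define y where "y = (\<Sum>k\<in>K. (q k \<bullet> z) *\<^sub>R q k)"
  show "y \<in> span S"
    unfolding y_def assms(3)[symmetric] by (intro span_sum span_mul span_base) auto
  have residual_orthogonal: "(z - y) \<bullet> q k = 0" if "k \<in> K" for k
  proof -
    have "y \<bullet> q k = (\<Sum>j\<in>K. (q j \<bullet> z) * (if j = k then 1 else 0))"
      unfolding y_def inner_sum_left using assms(2) that by (auto intro!: sum.cong)
    also have "\<dots> = q k \<bullet> z" using assms(1) that by (simp add: if_distrib sum.delta cong: if_cong)
    finally show ?thesis by (simp add: inner_diff_left inner_commute[of z])
  qed
  have "orthogonal (z - y) u" if "u \<in> span (q ` K)" for u
    by (rule orthogonal_to_span[OF that]) (auto simp: orthogonal_def residual_orthogonal)
  then show "\<forall>u\<in>S. (z - y) \<bullet> u = 0"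
    using assms(3) span_base by (fastforce simp: orthogonal_def)
qed

lemma norm_orthonormal_sum:
  fixes q :: "'i \<Rightarrow> 'a::real_inner"
  assumes "finite K" and "\<And>j k. j \<in> K \<Longrightarrow> k \<in> K \<Longrightarrow> q j \<bullet> q k = (if j = k then 1 else 0)"
  shows "norm (\<Sum>k\<in>K. c k *\<^sub>R q k) = L2_set c K"
proof -
  have "pairwise (\<lambda>j k. orthogonal (c j *\<^sub>R q j) (c k *\<^sub>R q k)) K"
    using assms(2) by (auto simp: pairwise_def orthogonal_def)
  then have "(norm (\<Sum>k\<in>K. c k *\<^sub>R q k))\<^sup>2 = (\<Sum>k\<in>K. (norm (c k *\<^sub>R q k))\<^sup>2)"
    by (rule norm_sum_Pythagorean[OF assms(1)])
  also have "\<dots> = (\<Sum>k\<in>K. (c k)\<^sup>2)"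
  proof (rule sum.cong)
    fix k assume "k \<in> K"
    have "norm (q k) = 1" using assms(2)[OF \<open>k \<in> K\<close> \<open>k \<in> K\<close>] by (simp add: norm_eq_1)
    then show "(norm (c k *\<^sub>R q k))\<^sup>2 = (c k)\<^sup>2" by (simp add: power_mult_distrib)
  qed simp
  finally show ?thesis by (simp add: L2_set_def real_sqrt_unique)
qed

definition gram_schmidt_vec :: "(nat \<Rightarrow> 'a::euclidean_space) \<Rightarrow> nat \<Rightarrow> 'a" where
  "gram_schmidt_vec a k =
     (let w = a k - orth_proj (a ` {1..k - 1}) (a k) in w /\<^sub>R norm w)"

lemma not_in_span_preceding:
  fixes a :: "nat \<Rightarrow> 'a::real_vector"
  assumes "independent (a ` {1..r})" "inj_on a {1..r}" "k \<in> {1..r}"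
  shows "a k \<notin> span (a ` {1..k - 1})"
proof
  assume "a k \<in> span (a ` {1..k - 1})"
  moreover have "a ` {1..k - 1} \<subseteq> a ` {1..r} - {a k}"
  proof
    fix x assume "x \<in> a ` {1..k - 1}"
    then obtain j where j: "j \<in> {1..k - 1}" "x = a j" by blast
    then have "a j \<noteq> a k" using assms(3) by (intro inj_on_contraD[OF assms(2)]) auto
    then show "x \<in> a ` {1..r} - {a k}" using j assms(3) by auto
  qed
  ultimately have "a k \<in> span (a ` {1..r} - {a k})" using span_mono by blast
  then have "dependent (a ` {1..r})" using assms(3) by (auto simp: dependent_def)
  then show False using assms(1) by simp
qed

lemma gram_schmidt_vec_basic:
  fixes a :: "nat \<Rightarrow> 'a::euclidean_space"
  assumes "independent (a ` {1..r})" "inj_on a {1..r}" "k \<in> {1..r}"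
  shows "norm (gram_schmidt_vec a k) = 1"
    and "gram_schmidt_vec a k \<in> span (a ` {1..k})"
    and "\<And>u. u \<in> span (a ` {1..k - 1}) \<Longrightarrow> gram_schmidt_vec a k \<bullet> u = 0"
proof -
  define w where "w = a k - orth_proj (a ` {1..k - 1}) (a k)"
  have q: "gram_schmidt_vec a k = w /\<^sub>R norm w" by (simp add: gram_schmidt_vec_def w_def)
  have proj_in: "orth_proj (a ` {1..k - 1}) (a k) \<in> span (a ` {1..k - 1})"
    by (rule orth_proj_in_span_orthogonal(1))
  then have "w \<noteq> 0" using not_in_span_preceding[OF assms] by (auto simp: w_def)
  then show "norm (gram_schmidt_vec a k) = 1" by (simp add: q)
  have "span (a ` {1..k - 1}) \<subseteq> span (a ` {1..k})" by (intro span_mono image_mono) auto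
  moreover have "a k \<in> span (a ` {1..k})" using assms(3) by (auto intro: span_base)
  ultimately show "gram_schmidt_vec a k \<in> span (a ` {1..k})"
    using proj_in by (auto simp: q w_def intro: span_mul span_diff)
  show "gram_schmidt_vec a k \<bullet> u = 0" if "u \<in> span (a ` {1..k - 1})" for u
    using orth_proj_in_span_orthogonal(2)[OF that] by (simp add: q w_def orthogonal_def)
qed

lemma gram_schmidt_vec_orthonormal:
  fixes a :: "nat \<Rightarrow> 'a::euclidean_space"
  assumes "independent (a ` {1..r})" "inj_on a {1..r}" "j \<in> {1..r}" "k \<in> {1..r}"
  shows "gram_schmidt_vec a j \<bullet> gram_schmidt_vec a k = (if j = k then 1 else 0)"
proof -
  have orth: "gram_schmidt_vec a j \<bullet> gram_schmidt_vec a k = 0"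
    if "j \<in> {1..r}" "k \<in> {1..r}" "j < k" for j k
  proof -
    have "span (a ` {1..j}) \<subseteq> span (a ` {1..k - 1})"
      using that by (intro span_mono image_mono) auto
    then have "gram_schmidt_vec a j \<in> span (a ` {1..k - 1})"
      using gram_schmidt_vec_basic(2)[OF assms(1,2) that(1)] by blast
    then show ?thesis
      using gram_schmidt_vec_basic(3)[OF assms(1,2) that(2)] by (simp add: inner_commute)
  qed
  show ?thesis
  proof (cases "j = k")
    case True
    then show ?thesis
      using gram_schmidt_vec_basic(1)[OF assms(1,2,4)] by (simp add: norm_eq_1)
  next
    case False
    then have "j < k \<or> k < j" by arith
    then have "gram_schmidt_vec a j \<bullet> gram_schmidt_vec a k = 0"
      using orth[of j k] orth[of k j] assms(3,4) inner_commute by metis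
    with False show ?thesis by simp
  qed
qed

lemma span_gram_schmidt_vec:
  fixes a :: "nat \<Rightarrow> 'a::euclidean_space"
  assumes "independent (a ` {1..r})" "inj_on a {1..r}" "s \<le> r"
  shows "span (gram_schmidt_vec a ` {1..s}) = span (a ` {1..s})"
proof -
  let ?q = "gram_schmidt_vec a"
  have onb: "?q j \<bullet> ?q k = (if j = k then 1 else 0)" if "j \<in> {1..s}" "k \<in> {1..s}" for j k
    using gram_schmidt_vec_orthonormal[OF assms(1,2)] that assms(3) by auto
  have q_in: "?q ` {1..s} \<subseteq> span (a ` {1..s})"
  proof
    fix v assume "v \<in> ?q ` {1..s}"
    then obtain k where k: "k \<in> {1..s}" "v = ?q k" by blast
    have "span (a ` {1..k}) \<subseteq> span (a ` {1..s})" using k by (intro span_mono image_mono) auto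
    then show "v \<in> span (a ` {1..s})"
      using gram_schmidt_vec_basic(2)[OF assms(1,2)] k assms(3) by auto
  qed
  have "inj_on ?q {1..s}" using onb by (intro inj_onI) (metis one_neq_zero)
  then have card_q: "card (?q ` {1..s}) = s" by (simp add: card_image)
  have indep_q: "independent (?q ` {1..s})"
  proof (rule pairwise_orthogonal_independent)
    show "pairwise orthogonal (?q ` {1..s})"
      using onb by (fastforce simp: pairwise_def orthogonal_def)
    show "0 \<notin> ?q ` {1..s}"
      using onb by (metis imageE inner_zero_left zero_neq_one)
  qed
  have "independent (a ` {1..s})"
    by (rule independent_mono[OF assms(1)]) (use assms(3) in auto)
  moreover have "inj_on a {1..s}"
    by (rule inj_on_subset[OF assms(2)]) (use assms(3) in auto)
  ultimately have "dim (span (a ` {1..s})) = s"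
    by (simp add: dim_span dim_eq_card_independent card_image)
  then have "span (a ` {1..s}) \<subseteq> span (?q ` {1..s})"
    using card_ge_dim_independent[OF q_in indep_q] card_q by simp
  moreover have "span (?q ` {1..s}) \<subseteq> span (a ` {1..s})"
    using span_minimal[OF q_in subspace_span] .
  ultimately show ?thesis by (rule antisym[rotated])
qed

lemma Qvec_eq_gram_schmidt_vec:
  "Qvec At p k = gram_schmidt_vec (\<lambda>j. column (p j) At) k"
  by (simp add: Qvec_def Wperp_def Wproj_def gram_schmidt_vec_def)

lemma dist_s_Fs_eq_norm_orth_proj:
  fixes At :: "real^'n^'m" and p :: "nat \<Rightarrow> 'n"
  defines "a \<equiv> \<lambda>k. column (p k) At"
  assumes "independent (a ` {1..r})" "inj_on a {1..r}" "s \<le> r"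
  shows "dist_s s (Fs At p s u) (Fs At p s v) = norm (orth_proj (a ` {1..s}) (u - v))"
proof -
  let ?q = "gram_schmidt_vec a"
  have onb: "?q j \<bullet> ?q k = (if j = k then 1 else 0)" if "j \<in> {1..s}" "k \<in> {1..s}" for j k
    using gram_schmidt_vec_orthonormal[OF assms(2,3)] that assms(4) by auto
  have "dist_s s (Fs At p s u) (Fs At p s v) = L2_set (\<lambda>k. ?q k \<bullet> (u - v)) {1..s}"
    by (simp add: dist_s_def Fs_def Qvec_eq_gram_schmidt_vec a_def inner_diff_right)
  also have "\<dots> = norm (\<Sum>k\<in>{1..s}. (?q k \<bullet> (u - v)) *\<^sub>R ?q k)"
    by (rule norm_orthonormal_sum[OF finite_atLeastAtMost onb, symmetric])
  also have "\<dots> = norm (orth_proj (a ` {1..s}) (u - v))"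
    by (simp only: orth_proj_orthonormal_basis[OF finite_atLeastAtMost onb
          span_gram_schmidt_vec[OF assms(2-4)]])
  finally show ?thesis .
qed

theorem proposition2:
  fixes A N :: "real^'n^'m" and \<eta> \<mu> :: real and p :: "nat \<Rightarrow> 'n" and s :: nat
  assumes "onorm (\<lambda>x. N *v x) \<le> \<eta>" and "\<eta> \<ge> 0" and "\<mu> \<ge> 0"
    and "rank (A + N) \<ge> 1"
    and "bij_betw p {1..CARD('n)} UNIV"
    and "independent ((\<lambda>k. column (p k) (A + N)) ` {1..rank (A + N)})"
    and "inj_on (\<lambda>k. column (p k) (A + N)) {1..rank (A + N)}"
    and "s \<in> {1..rank (A + N)}"
    and "\<forall>i. norm (Wperp (A + N) p s (column i (A + N))) \<le> \<mu>"
  shows "\<forall>i j. \<bar>norm (column i A - column j A)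
              - dist_s s (Fs (A + N) p s (column i A)) (Fs (A + N) p s (column j A))\<bar>
            \<le> 2 * (\<mu> + \<eta>)"
proof (intro allI)
  fix i j
  let ?S = "(\<lambda>k. column (p k) (A + N)) ` {1..s}"
  have column_A: "column k A = column k (A + N) - column k N" for k
    by (simp add: column_def vec_eq_iff)
  have residual: "norm (column k (A + N) - orth_proj ?S (column k (A + N))) \<le> \<mu>" for k
    using assms(9) by (simp add: Wperp_def Wproj_def)
  have column_N: "norm (column k N) \<le> \<eta>" for k
    using norm_column_le_onorm[of k N] assms(1) by simp
  have "\<bar>norm (column i A - column j A) - norm (orth_proj ?S (column i A - column j A))\<bar>
      \<le> 2 * (\<mu> + \<eta>)"
    using orth_proj_distortion_bound[OF residual[of i] residual[of j] column_N[of i] column_N[of j]]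
    by (simp only: column_A)
  moreover have "dist_s s (Fs (A + N) p s (column i A)) (Fs (A + N) p s (column j A))
      = norm (orth_proj ?S (column i A - column j A))"
    using dist_s_Fs_eq_norm_orth_proj[OF assms(6,7)] assms(8) by simp
  ultimately show "\<bar>norm (column i A - column j A)
              - dist_s s (Fs (A + N) p s (column i A)) (Fs (A + N) p s (column j A))\<bar>
            \<le> 2 * (\<mu> + \<eta>)"
    by simp
qed

end
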